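(* Let $0<\mu\le L$ and $\frac{25\mu}{(12L-\mu)^2}\le s\le\frac{1}{4L}$. For $\beta\in[0,1]$ define $$A_\beta=\frac{1}{(1-\sqrt{\mu s})^2}\left[1-2Ls\cdot\frac{(\beta-\beta^2)\mu s+(3+\beta^2-2\beta)\sqrt{\mu s}+2-2\beta}{2\sqrt{\mu s}}\right],\qquad B_\beta=\frac{1}{1-\sqrt{\mu s}}+\frac{\beta^2Ls}{2}.$$ Then there exists $\beta_c\in[0,1]$, depending on $\mu,s,L$, such that $\frac{A_\beta}{B_\beta}\le\frac16$ for $0\le\beta\le\beta_c$ and $\frac{A_\beta}{B_\beta}>\frac16$ for $\beta_c<\beta\le1$. *)

theory Defs
  imports Complex_Main
begin

definition A_beta :: "real \<Rightarrow> real \<Rightarrow> real \<Rightarrow> real \<Rightarrow> real" where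
  "A_beta \<mu> L s \<beta> = (1 / (1 - sqrt (\<mu> * s))^2) *
     (1 - 2 * L * s * (((\<beta> - \<beta>^2) * \<mu> * s + (3 + \<beta>^2 - 2 * \<beta>) * sqrt (\<mu> * s) + 2 - 2 * \<beta>)
        / (2 * sqrt (\<mu> * s))))"

definition B_beta :: "real \<Rightarrow> real \<Rightarrow> real \<Rightarrow> real \<Rightarrow> real" where
  "B_beta \<mu> L s \<beta> = 1 / (1 - sqrt (\<mu> * s)) + \<beta>^2 * L * s / 2"

end

(* Put x = sqrt(mu s) and t = L s. Since B_beta > 0, the inequality A_beta / B_beta <= 1/6 says
   6 A_beta - B_beta <= 0, and x (1 - x)^2 (6 A_beta - B_beta) is a quadratic polynomial in beta.
   For 0 < x <= 1 and t > 0 its difference quotient is positive on [0,1], so it is strictly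
   increasing there; at beta = 0 it is negative, because the lower bound on s is, after taking
   square roots, exactly x^2 + 5 x <= 12 t. Hence beta_c is its root in [0,1] if it has one,
   and 1 otherwise. *)

theory Submission
  imports Defs
begin

lemma strict_mono_on_threshold:
  fixes f :: "'a::linear_continuum_topology \<Rightarrow> 'b::linorder_topology"
  assumes "a \<le> b" "strict_mono_on {a..b} f" "continuous_on {a..b} f" "f a \<le> y"
  shows "\<exists>c\<in>{a..b}. (\<forall>z\<in>{a..c}. f z \<le> y) \<and> (\<forall>z\<in>{c<..b}. y < f z)"
proof (cases "f b \<le> y")
  case True
  have "f z \<le> y" if "z \<in> {a..b}" for z
    using that True strict_mono_on_leD[OF assms(2)] by (meson atLeastAtMost_iff order.refl order.trans)
  then show ?thesis using \<open>a \<le> b\<close> by (intro bexI[of _ b]) auto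
next
  case False
  then obtain c where c: "a \<le> c" "c \<le> b" "f c = y"
    using IVT'[OF assms(4) _ assms(1,3)] by fastforce
  have "f z \<le> y" if "z \<in> {a..c}" for z
    using that c strict_mono_on_leD[OF assms(2), of z c] by auto
  moreover have "y < f z" if "z \<in> {c<..b}" for z
    using that c strict_mono_onD[OF assms(2), of c z] by auto
  ultimately show ?thesis using c by (intro bexI[of _ c]) auto
qed

definition gap_poly :: "real \<Rightarrow> real \<Rightarrow> real \<Rightarrow> real" where
  "gap_poly x t b = 6 * x - 6 * t * ((b - b^2) * x^2 + (3 + b^2 - 2 * b) * x + 2 - 2 * b)
     - x * (1 - x) - x * (1 - x)^2 * t * b^2 / 2"

lemma six_A_beta_minus_B_beta:
  assumes "0 < \<mu> * s" "\<mu> * s \<noteq> 1"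
  shows "6 * A_beta \<mu> L s b - B_beta \<mu> L s b
           = gap_poly (sqrt (\<mu> * s)) (L * s) b / (sqrt (\<mu> * s) * (1 - sqrt (\<mu> * s))^2)"
proof -
  define x where "x = sqrt (\<mu> * s)"
  have x: "0 < x" "1 - x \<noteq> 0" "\<mu> * s = x^2"
    using assms unfolding x_def by auto
  have A: "A_beta \<mu> L s b = (1 - L * s * ((b - b^2) * x^2 + (3 + b^2 - 2 * b) * x + 2 - 2 * b) / x)
                          / (1 - x)^2"
    unfolding A_beta_def x_def[symmetric] by (simp add: mult.assoc x(3))
  have B: "B_beta \<mu> L s b = 1 / (1 - x) + b^2 * (L * s) / 2"
    unfolding B_beta_def x_def[symmetric] by (simp add: mult.assoc)
  show ?thesis
    using x unfolding A B gap_poly_def x_def[symmetric]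
    by (simp add: field_simps) (simp add: algebra_simps eval_nat_numeral)
qed

lemma gap_poly_diff:
  "gap_poly x t b' - gap_poly x t b
     = (b' - b) * t * (12 + 12 * x - 6 * x^2 - (6 * (x - x^2) + x * (1 - x)^2 / 2) * (b + b'))"
  unfolding gap_poly_def by (simp add: field_simps power2_eq_square)

lemma strict_mono_on_gap_poly:
  assumes "0 \<le> x" "x \<le> 1" "0 < t"
  shows "strict_mono_on {0..1} (gap_poly x t)"
proof (rule strict_mono_onI)
  fix b b' :: real assume b: "b \<in> {0..1}" "b' \<in> {0..1}" "b < b'"
  define c where "c = 6 * (x - x^2) + x * (1 - x)^2 / 2"
  have "c = 6 * (x * (1 - x)) + x * (1 - x)^2 / 2"
    unfolding c_def by (simp add: algebra_simps power2_eq_square)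
  moreover have "0 \<le> x * (1 - x)" "0 \<le> x * (1 - x)^2" using assms by simp_all
  ultimately have "0 \<le> c" by linarith
  then have "c * (b + b') \<le> c * 2" using b by (intro mult_left_mono) auto
  moreover have "x * (1 - x)^2 \<le> 1"
    using mult_mono[of x 1 "(1 - x)^2" 1] power_mono[of "1 - x" 1 2] assms by simp
  moreover have "c * 2 = 12 * x - 12 * x^2 + x * (1 - x)^2"
    unfolding c_def by (simp add: algebra_simps)
  moreover have "0 \<le> x^2" by simp
  ultimately have "0 < 12 + 12 * x - 6 * x^2 - c * (b + b')"
    by linarith
  then have "0 < (b' - b) * t * (12 + 12 * x - 6 * x^2 - c * (b + b'))"
    using b assms by simp
  then show "gap_poly x t b < gap_poly x t b'"
    using gap_poly_diff[of x t b' b] unfolding c_def by linarith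
qed

lemma gap_poly_0_neg:
  assumes "0 < x" "x^2 + 5 * x \<le> 12 * t"
  shows "gap_poly x t 0 < 0"
proof -
  have "(x^2 + 5 * x) * (3 * x + 2) \<le> 12 * t * (3 * x + 2)"
    using assms by (intro mult_right_mono) auto
  moreover have "0 < x^3" "0 < x^2" using assms by auto
  ultimately show ?thesis
    unfolding gap_poly_def by (simp add: algebra_simps power2_eq_square power3_eq_cube)
qed

lemma continuous_on_gap_poly: "continuous_on S (gap_poly x t)"
  unfolding gap_poly_def by (intro continuous_intros) auto

lemma A_beta_div_B_beta_le_iff:
  assumes "0 < \<mu> * s" "\<mu> * s < 1" "0 \<le> L * s"
  shows "A_beta \<mu> L s b / B_beta \<mu> L s b \<le> 1/6 \<longleftrightarrow> gap_poly (sqrt (\<mu> * s)) (L * s) b \<le> 0"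
proof -
  have x: "0 < sqrt (\<mu> * s)" "sqrt (\<mu> * s) < 1"
    using assms by auto
  have "0 < B_beta \<mu> L s b"
    using x assms unfolding B_beta_def by (intro add_pos_nonneg) (auto simp: mult.assoc)
  then have "A_beta \<mu> L s b / B_beta \<mu> L s b \<le> 1/6 \<longleftrightarrow> 6 * A_beta \<mu> L s b - B_beta \<mu> L s b \<le> 0"
    by (simp add: divide_le_eq mult.commute)
  moreover have "0 < sqrt (\<mu> * s) * (1 - sqrt (\<mu> * s))^2" using x by simp
  ultimately show ?thesis
    using assms by (simp add: six_A_beta_minus_B_beta divide_le_0_iff)
qed

lemma step_size_bounds:
  fixes \<mu> L s :: real
  assumes "0 < \<mu>" "\<mu> \<le> L"
    and "25 * \<mu> / (12 * L - \<mu>)^2 \<le> s" "s \<le> 1 / (4 * L)"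
  shows "0 < \<mu> * s" "\<mu> * s < 1" "0 < L * s"
    and "(sqrt (\<mu> * s))^2 + 5 * sqrt (\<mu> * s) \<le> 12 * (L * s)"
proof -
  have denom_pos: "0 < 12 * L - \<mu>" using assms by simp
  have lower: "25 * \<mu> \<le> s * (12 * L - \<mu>)^2"
    using assms(3) denom_pos by (simp add: pos_divide_le_eq)
  have "0 < 25 * \<mu> / (12 * L - \<mu>)^2" using assms(1) denom_pos by simp
  then have s: "0 < s" using assms(3) by linarith
  then show "0 < \<mu> * s" "0 < L * s" using assms by auto
  have "L * s \<le> L * (1 / (4 * L))" using assms by (intro mult_left_mono) auto
  then have "L * s \<le> 1/4" using assms by simp
  moreover have "\<mu> * s \<le> L * s" using assms(2) s by simp
  ultimately show "\<mu> * s < 1" by linarith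
  have sq: "(sqrt (\<mu> * s))^2 = \<mu> * s" using assms(1) s by simp
  have "(5 * sqrt (\<mu> * s))^2 = s * (25 * \<mu>)"
    unfolding power_mult_distrib sq by simp
  also have "\<dots> \<le> s * (s * (12 * L - \<mu>)^2)"
    using lower s by simp
  also have "\<dots> = (12 * (L * s) - \<mu> * s)^2"
    by (simp add: power2_eq_square algebra_simps)
  finally have "5 * sqrt (\<mu> * s) \<le> 12 * (L * s) - \<mu> * s"
    by (rule power2_le_imp_le) (use \<open>\<mu> * s \<le> L * s\<close> s assms in simp)
  then show "(sqrt (\<mu> * s))^2 + 5 * sqrt (\<mu> * s) \<le> 12 * (L * s)"
    unfolding sq by linarith
qed

theorem lemma5p6:
  fixes \<mu> L s :: real
  assumes "0 < \<mu>" "\<mu> \<le> L"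
    and "25 * \<mu> / (12 * L - \<mu>)^2 \<le> s" "s \<le> 1 / (4 * L)"
  shows "\<exists>\<beta>c \<in> {0..1}.
           (\<forall>\<beta>. 0 \<le> \<beta> \<and> \<beta> \<le> \<beta>c \<longrightarrow> A_beta \<mu> L s \<beta> / B_beta \<mu> L s \<beta> \<le> 1/6) \<and>
           (\<forall>\<beta>. \<beta>c < \<beta> \<and> \<beta> \<le> 1 \<longrightarrow> A_beta \<mu> L s \<beta> / B_beta \<mu> L s \<beta> > 1/6)"
proof -
  define x t where "x = sqrt (\<mu> * s)" and "t = L * s"
  note bounds = step_size_bounds[OF assms]
  have iff: "A_beta \<mu> L s \<beta> / B_beta \<mu> L s \<beta> \<le> 1/6 \<longleftrightarrow> gap_poly x t \<beta> \<le> 0" for \<beta>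
    unfolding x_def t_def using bounds by (intro A_beta_div_B_beta_le_iff) auto
  have "0 < x" "x \<le> 1" "0 < t" using bounds unfolding x_def t_def by auto
  moreover have "gap_poly x t 0 \<le> 0"
    using gap_poly_0_neg[of x t] bounds unfolding x_def t_def by simp
  ultimately obtain c where "c \<in> {0..1}"
      "\<forall>\<beta>\<in>{0..c}. gap_poly x t \<beta> \<le> 0" "\<forall>\<beta>\<in>{c<..1}. 0 < gap_poly x t \<beta>"
    using strict_mono_on_threshold[OF zero_le_one strict_mono_on_gap_poly continuous_on_gap_poly]
    by (metis less_imp_le)
  then show ?thesis using iff by (intro bexI[of _ c]) (auto simp: not_le[symmetric])
qed

end
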